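(* Let $L\subset\mathbb{R}$ be a Galois extension of $\mathbb{Q}$ with cyclic Galois group of order $4$ generated by $\sigma$, let $l$ be its unique quadratic subfield with fundamental unit $u_l>1$, and let $u_0\in\mathcal{O}_L^*$ with $u_0\ne\pm1$ and $N_{L/l}(u_0)=u_0\sigma^2(u_0)=\pm1$. Put $W_1=\log u_l$, $W_2=\log|u_0|$, $W_3=\log|\sigma(u_0)|$. For integers $n_1,n_2,n_3$ let $w=n_1\operatorname{LOG}(u_l)\wedge\operatorname{LOG}(u_0)+n_2\operatorname{LOG}(u_l)\wedge\operatorname{LOG}(\sigma(u_0))+n_3\operatorname{LOG}(u_0)\wedge\operatorname{LOG}(\sigma(u_0))$. Then (i) $\|w\|_1\ge 4|n_3|(W_2^2+W_3^2)$; and (ii) if $(n_1,n_2)\ne(0,0)$, then $\|w\|_1\ge 2W_1\big(2\max\{|W_2|,|W_3|\}+|W_2|+|W_3|\big)$.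
   Context: For a totally real number field $L$, $\operatorname{LOG}:\mathcal{O}_L^*\to\mathbb{R}^{\mathcal{A}_L}$, $\operatorname{LOG}(\gamma)=(\log|\tau(\gamma)|)_\tau$, indexed by the real embeddings $\tau$ of $L$. With the standard orthonormal basis $\{\delta^v\}$ of $\mathbb{R}^{\mathcal{A}_L}$ and $\delta^I=\delta^{v_1}\wedge\cdots\wedge\delta^{v_j}$ for $j$-subsets $I$, the 1-norm of $w=\sum_I c_I\delta^I\in\bigwedge^j\mathbb{R}^{\mathcal{A}_L}$ is $\|w\|_1=\sum_I|c_I|$. *)

theory Defs
  imports Complex_Main "HOL-Computational_Algebra.Polynomial"
begin

definition real_subfield :: "real set \<Rightarrow> bool" where
  "real_subfield K \<longleftrightarrow> 0 \<in> K \<and> 1 \<in> K \<and>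
     (\<forall>x\<in>K. \<forall>y\<in>K. x + y \<in> K \<and> x * y \<in> K) \<and>
     (\<forall>x\<in>K. - x \<in> K) \<and> (\<forall>x\<in>K. x \<noteq> 0 \<longrightarrow> inverse x \<in> K)"

definition rat_dim :: "real set \<Rightarrow> nat \<Rightarrow> bool" where
  "rat_dim K d \<longleftrightarrow> (\<exists>b::nat \<Rightarrow> real.
     (\<forall>i<d. b i \<in> K) \<and>
     (\<forall>q. (\<forall>i<d. q i \<in> \<rat>) \<and> (\<Sum>i<d. q i * b i) = 0 \<longrightarrow> (\<forall>i<d. q i = 0)) \<and>
     K = {(\<Sum>i<d. q i * b i) | q. \<forall>i<d. q i \<in> \<rat>})"

definition field_aut :: "real set \<Rightarrow> (real \<Rightarrow> real) \<Rightarrow> bool" where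
  "field_aut K g \<longleftrightarrow> bij_betw g K K \<and> g 1 = 1 \<and>
     (\<forall>x\<in>K. \<forall>y\<in>K. g (x + y) = g x + g y \<and> g (x * y) = g x * g y)"

definition alg_int :: "real \<Rightarrow> bool" where
  "alg_int x \<longleftrightarrow> (\<exists>p :: int poly. lead_coeff p = 1 \<and> poly (map_poly of_int p) x = 0)"

definition int_unit :: "real set \<Rightarrow> real \<Rightarrow> bool" where
  "int_unit K x \<longleftrightarrow> x \<in> K \<and> x \<noteq> 0 \<and> alg_int x \<and> alg_int (inverse x)"

text \<open>LOG vector, indexed by the embeddings sigma^k, k < 4, of a cyclic quartic field.\<close>
definition LOG4 :: "(real \<Rightarrow> real) \<Rightarrow> real \<Rightarrow> nat \<Rightarrow> real" where
  "LOG4 \<sigma> \<gamma> k = ln \<bar>(\<sigma> ^^ k) \<gamma>\<bar>"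

text \<open>Coefficient of the basis 2-vector delta^i wedge delta^j (i < j) in a wedge b.\<close>
definition wedge :: "(nat \<Rightarrow> real) \<Rightarrow> (nat \<Rightarrow> real) \<Rightarrow> nat \<Rightarrow> nat \<Rightarrow> real" where
  "wedge a b i j = a i * b j - a j * b i"

definition norm1_2 :: "nat \<Rightarrow> (nat \<Rightarrow> nat \<Rightarrow> real) \<Rightarrow> real" where
  "norm1_2 n c = (\<Sum>(i, j) \<in> {(i, j). i < j \<and> j < n}. \<bar>c i j\<bar>)"

end

theory Submission imports Defs begin

text \<open>The automorphism \<open>\<sigma>\<close> restricts to an involution of the quadratic subfield, so
  \<open>\<sigma> u\<^sub>l = \<plusminus>u\<^sub>l\<^sup>e\<close> with \<open>e = \<plusminus>1\<close> and \<open>LOG u\<^sub>l = W\<^sub>1 (1, e, 1, e)\<close>; the norm condition gives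
  \<open>LOG u\<^sub>0 = (W\<^sub>2, W\<^sub>3, -W\<^sub>2, -W\<^sub>3)\<close>, and \<open>LOG (\<sigma> u\<^sub>0)\<close> is its cyclic shift. The six coefficients
  of \<open>w\<close> then pair up: \<open>w\<^sub>0\<^sub>1 + w\<^sub>2\<^sub>3\<close> and \<open>w\<^sub>0\<^sub>3 - w\<^sub>1\<^sub>2\<close> equal \<open>\<mp>2 n\<^sub>3 (W\<^sub>2\<^sup>2 + W\<^sub>3\<^sup>2)\<close>, which gives (i),
  while \<open>w\<^sub>0\<^sub>1 - w\<^sub>2\<^sub>3, w\<^sub>0\<^sub>3 + w\<^sub>1\<^sub>2, w\<^sub>0\<^sub>2, w\<^sub>1\<^sub>3\<close> involve only \<open>A + i B = (n\<^sub>1 - i n\<^sub>2)(W\<^sub>2 + i W\<^sub>3)\<close>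
  and sum to \<open>2 W\<^sub>1 (2 max \<bar>A\<bar> \<bar>B\<bar> + \<bar>A\<bar> + \<bar>B\<bar>)\<close>. For (ii) it remains to see that
  multiplication by a nonzero Gaussian integer does not decrease \<open>2 max \<bar>a\<bar> \<bar>b\<bar> + \<bar>a\<bar> + \<bar>b\<bar>\<close>.\<close>

lemma real_subfield_zero: "real_subfield K \<Longrightarrow> 0 \<in> K"
  and real_subfield_one: "real_subfield K \<Longrightarrow> 1 \<in> K"
  and real_subfield_add: "real_subfield K \<Longrightarrow> x \<in> K \<Longrightarrow> y \<in> K \<Longrightarrow> x + y \<in> K"
  and real_subfield_mult: "real_subfield K \<Longrightarrow> x \<in> K \<Longrightarrow> y \<in> K \<Longrightarrow> x * y \<in> K"
  and real_subfield_uminus: "real_subfield K \<Longrightarrow> x \<in> K \<Longrightarrow> - x \<in> K"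
  and real_subfield_inverse: "real_subfield K \<Longrightarrow> x \<in> K \<Longrightarrow> inverse x \<in> K"
  unfolding real_subfield_def by (simp_all, metis inverse_zero)

lemma real_subfield_diff: "real_subfield K \<Longrightarrow> x \<in> K \<Longrightarrow> y \<in> K \<Longrightarrow> x - y \<in> K"
  by (metis diff_conv_add_uminus real_subfield_add real_subfield_uminus)

lemma real_subfield_divide: "real_subfield K \<Longrightarrow> x \<in> K \<Longrightarrow> y \<in> K \<Longrightarrow> x / y \<in> K"
  by (metis divide_inverse real_subfield_inverse real_subfield_mult)

lemma real_subfield_of_nat: "real_subfield K \<Longrightarrow> real n \<in> K"
  by (induction n) (auto intro: real_subfield_add real_subfield_zero real_subfield_one)

lemma real_subfield_of_int: "real_subfield K \<Longrightarrow> real_of_int n \<in> K"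
  by (cases n) (auto intro: real_subfield_of_nat real_subfield_diff real_subfield_one real_subfield_uminus)

lemma real_subfield_Rats: "real_subfield K \<Longrightarrow> r \<in> \<rat> \<Longrightarrow> r \<in> K"
  by (auto elim!: Rats_cases' intro!: real_subfield_divide real_subfield_of_int)

lemma real_subfield_power: "real_subfield K \<Longrightarrow> x \<in> K \<Longrightarrow> x ^ n \<in> K"
  by (induction n) (auto intro: real_subfield_mult real_subfield_one)

lemma real_subfield_power_int: "real_subfield K \<Longrightarrow> x \<in> K \<Longrightarrow> x powi n \<in> K"
  unfolding power_int_def by (auto intro: real_subfield_power real_subfield_inverse)

text \<open>Among \<open>1, u, u\<^sup>2\<close> in a two-dimensional \<open>\<rat>\<close>-space there is a linear relation; its
  coefficients are the \<open>2 \<times> 2\<close> minors of the coordinate matrix.\<close>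
lemma rat_dim_2_quadratic_relation:
  assumes "rat_dim K 2" "1 \<in> K" "u \<in> K" "u * u \<in> K"
  shows "u \<in> \<rat> \<or> (\<exists>a\<in>\<rat>. \<exists>c\<in>\<rat>. u * u = a * u + c)"
proof -
  obtain b :: "nat \<Rightarrow> real" where K: "K = {(\<Sum>i<2. q i * b i) | q. \<forall>i<2. q i \<in> \<rat>}"
    using assms(1) unfolding rat_dim_def by blast
  have coords: "\<exists>s\<in>\<rat>. \<exists>t\<in>\<rat>. x = s * b 0 + t * b 1" if x: "x \<in> K" for x
  proof -
    obtain q where "x = (\<Sum>i<2. q i * b i)" "\<forall>i<2. q i \<in> \<rat>"
      using x by (subst (asm) K) blast
    then show ?thesis by (auto simp: numeral_2_eq_2)
  qed
  obtain p0 p1 where p: "p0 \<in> \<rat>" "p1 \<in> \<rat>" "1 = p0 * b 0 + p1 * b 1"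
    using coords assms(2) by blast
  obtain q0 q1 where q: "q0 \<in> \<rat>" "q1 \<in> \<rat>" "u = q0 * b 0 + q1 * b 1"
    using coords assms(3) by blast
  obtain r0 r1 where r: "r0 \<in> \<rat>" "r1 \<in> \<rat>" "u * u = r0 * b 0 + r1 * b 1"
    using coords assms(4) by blast
  define d where "d = p0 * q1 - p1 * q0"
  show ?thesis
  proof (cases "d = 0")
    case False
    define A C where "A = p0 * r1 - p1 * r0" and "C = q0 * r1 - q1 * r0"
    have "C * 1 - A * u + d * (u * u) = 0"
      unfolding A_def C_def d_def by (subst p(3), subst q(3), subst r(3)) algebra
    then have "u * u = A / d * u + (- C / d)"
      using False by (simp add: field_simps)
    moreover have "A / d \<in> \<rat>" "- C / d \<in> \<rat>"
      unfolding A_def C_def d_def using p q r by auto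
    ultimately show ?thesis by blast
  next
    case True
    consider "p0 \<noteq> 0" | "p1 \<noteq> 0" using p(3) by fastforce
    then show ?thesis
    proof cases
      case 1
      have "u = (q0 / p0) * (p0 * b 0 + p1 * b 1)"
        using True 1 unfolding q(3) d_def by (simp add: field_simps)
      then show ?thesis using p q by (auto simp flip: p(3))
    next
      case 2
      have "u = (q1 / p1) * (p0 * b 0 + p1 * b 1)"
        using True 2 unfolding q(3) d_def by (simp add: field_simps)
      then show ?thesis using p q by (auto simp flip: p(3))
    qed
  qed
qed

lemma ln_power_int:
  fixes x :: real
  assumes "x > 0" shows "ln (x powi m) = of_int m * ln x"
proof -
  have "x powi m = x powr of_int m" using powr_real_of_int'[of x m] assms by simp
  then show ?thesis using assms by simp
qed

lemma ln_abs_add_eq_zero_if_mult_pm1: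
  fixes x y :: real
  assumes "x * y \<in> {1, -1}"
  shows "ln \<bar>x\<bar> + ln \<bar>y\<bar> = 0"
proof -
  have "\<bar>x\<bar> * \<bar>y\<bar> = 1" using assms by (auto simp flip: abs_mult)
  moreover from this have "\<bar>x\<bar> > 0" "\<bar>y\<bar> > 0"
    by (auto simp: zero_less_abs_iff)
  ultimately show ?thesis using ln_mult [of "\<bar>x\<bar>" "\<bar>y\<bar>"] by simp
qed

locale subfield_aut =
  fixes L :: "real set" and \<sigma> :: "real \<Rightarrow> real"
  assumes subfield: "real_subfield L" and aut: "field_aut L \<sigma>"
begin

lemma hom_add: "x \<in> L \<Longrightarrow> y \<in> L \<Longrightarrow> \<sigma> (x + y) = \<sigma> x + \<sigma> y"
  and hom_mult: "x \<in> L \<Longrightarrow> y \<in> L \<Longrightarrow> \<sigma> (x * y) = \<sigma> x * \<sigma> y"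
  and hom_one: "\<sigma> 1 = 1"
  and maps_into: "x \<in> L \<Longrightarrow> \<sigma> x \<in> L"
  and inj: "inj_on \<sigma> L"
  using aut unfolding field_aut_def bij_betw_def by auto

lemma hom_zero: "\<sigma> 0 = 0"
  using hom_add [of 0 0] real_subfield_zero [OF subfield] by simp

lemma hom_uminus: "x \<in> L \<Longrightarrow> \<sigma> (- x) = - \<sigma> x"
  using hom_add [of x "- x"] real_subfield_uminus [OF subfield] hom_zero by simp

lemma hom_diff: "x \<in> L \<Longrightarrow> y \<in> L \<Longrightarrow> \<sigma> (x - y) = \<sigma> x - \<sigma> y"
  using hom_add [of x "- y"] hom_uminus [of y] real_subfield_uminus [OF subfield] by simp

lemma nonzero: "x \<in> L \<Longrightarrow> x \<noteq> 0 \<Longrightarrow> \<sigma> x \<noteq> 0"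
  using inj hom_zero real_subfield_zero [OF subfield] by (metis inj_on_contraD)

lemma hom_inverse: "x \<in> L \<Longrightarrow> \<sigma> (inverse x) = inverse (\<sigma> x)"
proof (cases "x = 0")
  case False
  assume x: "x \<in> L"
  have "\<sigma> x * \<sigma> (inverse x) = 1"
    using hom_mult [OF x real_subfield_inverse [OF subfield x]] False hom_one by simp
  then show ?thesis by (metis inverse_unique)
qed (simp add: hom_zero)

lemma hom_divide: "x \<in> L \<Longrightarrow> y \<in> L \<Longrightarrow> \<sigma> (x / y) = \<sigma> x / \<sigma> y"
  using hom_mult [of x "inverse y"] hom_inverse [of y] real_subfield_inverse [OF subfield]
  by (simp add: divide_inverse)

lemma fixes_of_nat: "\<sigma> (real n) = real n"
  by (induction n) (auto simp: hom_zero hom_one hom_add real_subfield_of_nat [OF subfield]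
      real_subfield_one [OF subfield])

lemma fixes_of_int: "\<sigma> (real_of_int n) = real_of_int n"
  by (cases n) (auto simp: fixes_of_nat hom_uminus hom_diff hom_one real_subfield_of_nat [OF subfield]
      real_subfield_one [OF subfield] real_subfield_uminus [OF subfield])

lemma fixes_Rats: "r \<in> \<rat> \<Longrightarrow> \<sigma> r = r"
  by (auto elim!: Rats_cases' simp: hom_divide real_subfield_of_int [OF subfield] fixes_of_int)

lemma hom_power: "x \<in> L \<Longrightarrow> \<sigma> (x ^ n) = \<sigma> x ^ n"
  by (induction n) (simp_all add: hom_one hom_mult real_subfield_power [OF subfield])

lemma hom_power_int: "x \<in> L \<Longrightarrow> \<sigma> (x powi k) = \<sigma> x powi k"
  unfolding power_int_def
  by (simp add: hom_power hom_inverse real_subfield_inverse [OF subfield])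

lemma hom_poly_of_int:
  "x \<in> L \<Longrightarrow> poly (map_poly real_of_int p) x \<in> L \<and>
     \<sigma> (poly (map_poly real_of_int p) x) = poly (map_poly real_of_int p) (\<sigma> x)"
proof (induction p rule: pCons_induct)
  case 0
  then show ?case using hom_zero real_subfield_zero [OF subfield] by simp
next
  case (pCons a p)
  then show ?case
    by (simp add: map_poly_pCons hom_add hom_mult fixes_of_int real_subfield_add [OF subfield]
        real_subfield_mult [OF subfield] real_subfield_of_int [OF subfield])
qed

lemma alg_int_image: "x \<in> L \<Longrightarrow> alg_int x \<Longrightarrow> alg_int (\<sigma> x)"
  unfolding alg_int_def using hom_poly_of_int hom_zero by metis

lemma int_unit_image:
  assumes "l \<subseteq> L" "int_unit l u" "\<sigma> u \<in> l"
  shows "int_unit l (\<sigma> u)"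
proof -
  have "u \<in> L" "inverse u \<in> L" "u \<noteq> 0" "alg_int u" "alg_int (inverse u)"
    using assms real_subfield_inverse [OF subfield] unfolding int_unit_def by auto
  then show ?thesis
    using assms(3) alg_int_image nonzero hom_inverse unfolding int_unit_def by metis
qed

text \<open>An element of a quadratic subfield satisfies a rational quadratic equation, and \<open>\<sigma>\<close>
  permutes its roots.\<close>
lemma quadratic_subfield_involution:
  assumes l: "real_subfield l" "l \<subseteq> L" "rat_dim l 2" and u: "u \<in> l"
  shows "\<sigma> u \<in> l \<and> \<sigma> (\<sigma> u) = u"
proof -
  have uL: "u \<in> L" using u l(2) by blast
  consider "u \<in> \<rat>" | a c where "a \<in> \<rat>" "c \<in> \<rat>" "u * u = a * u + c"
    using rat_dim_2_quadratic_relation [OF l(3) real_subfield_one [OF l(1)] u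
        real_subfield_mult [OF l(1) u u]] by blast
  then show ?thesis
  proof cases
    case 1
    then show ?thesis using fixes_Rats u by simp
  next
    case (2 a c)
    note quadratic = 2
    have aL: "a \<in> L" "c \<in> L" using quadratic real_subfield_Rats [OF subfield] by auto
    have "\<sigma> u * \<sigma> u = a * \<sigma> u + c"
      using hom_mult [OF uL uL] hom_add [OF real_subfield_mult [OF subfield aL(1) uL] aL(2)]
        hom_mult [OF aL(1) uL] fixes_Rats quadratic by simp
    then have "(\<sigma> u - u) * (\<sigma> u + u - a) = 0"
      using quadratic(3) by (simp add: algebra_simps)
    then consider "\<sigma> u = u" | "\<sigma> u = a - u" by fastforce
    then show ?thesis
    proof cases
      case 2
      have "\<sigma> (a - u) = u" using hom_diff [OF aL(1) uL] 2 fixes_Rats quadratic(1) by simp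
      then show ?thesis
        using 2 real_subfield_diff [OF l(1) real_subfield_Rats [OF l(1) quadratic(1)] u] by simp
    qed (simp add: u)
  qed
qed

text \<open>\<open>\<sigma> u = \<plusminus>u\<^sup>k\<close> since \<open>\<sigma> u\<close> is again a unit of \<open>l\<close>; applying \<open>\<sigma>\<close> once more gives
  \<open>u = \<bar>\<sigma> u\<bar>\<^sup>k = u\<^bsup>k\<^sup>2\<^esub>\<close>, so \<open>k = \<plusminus>1\<close>.\<close>
lemma ln_abs_conj_fundamental_unit:
  assumes l: "real_subfield l" "l \<subseteq> L" "rat_dim l 2"
    and u: "int_unit l u" "u > 1"
    and fundamental: "\<forall>\<epsilon>. int_unit l \<epsilon> \<longrightarrow> (\<exists>k::int. \<epsilon> = u powi k \<or> \<epsilon> = - (u powi k))"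
  shows "\<exists>e\<in>{1, -1}. ln \<bar>\<sigma> u\<bar> = e * ln u"
proof -
  have ul: "u \<in> l" using u(1) unfolding int_unit_def by simp
  then have uL: "u \<in> L" using l(2) by blast
  have conj: "\<sigma> u \<in> l" "\<sigma> (\<sigma> u) = u"
    using quadratic_subfield_involution [OF l ul] by auto
  obtain k :: int where k: "\<sigma> u = u powi k \<or> \<sigma> u = - (u powi k)"
    using fundamental int_unit_image [OF l(2) u(1) conj(1)] by blast
  have abs_conj: "\<bar>\<sigma> u\<bar> = u powi k"
    using k u(2) by (auto simp: power_int_abs)
  have "\<sigma> (\<sigma> u) = \<sigma> u powi k \<or> \<sigma> (\<sigma> u) = - (\<sigma> u powi k)"
    using k hom_power_int [OF uL] hom_uminus [OF real_subfield_power_int [OF subfield uL]] by auto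
  then have "\<bar>\<sigma> (\<sigma> u)\<bar> = \<bar>\<sigma> u\<bar> powi k"
    by (auto simp: power_int_abs)
  then have "u = \<bar>\<sigma> u\<bar> powi k"
    using conj(2) u(2) by simp
  moreover have ln_conj: "ln \<bar>\<sigma> u\<bar> = of_int k * ln u"
    unfolding abs_conj using u(2) by (simp add: ln_power_int)
  moreover have "\<bar>\<sigma> u\<bar> > 0"
    using abs_conj u(2) by simp
  ultimately have "ln u = of_int k * (of_int k * ln u)"
    by (metis ln_power_int)
  then have "(of_int k - 1) * (of_int k + 1) * ln u = 0"
    by (simp add: algebra_simps)
  then have "of_int k \<in> {1, -1 :: real}"
    using u(2) by auto
  with ln_conj show ?thesis by blast
qed

lemma funpow_mult_funpow_add2_pm1:
  assumes "u \<in> L" "u * \<sigma> (\<sigma> u) \<in> {1, -1}"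
  shows "(\<sigma> ^^ k) u * (\<sigma> ^^ (k + 2)) u \<in> {1, -1}"
proof (induction k)
  case 0
  then show ?case using assms(2) by (simp add: numeral_2_eq_2)
next
  case (Suc k)
  have "(\<sigma> ^^ k) u \<in> L" "(\<sigma> ^^ (k + 2)) u \<in> L"
    using assms(1) by (induction k) (auto simp: maps_into)
  then have "(\<sigma> ^^ Suc k) u * (\<sigma> ^^ (Suc k + 2)) u = \<sigma> ((\<sigma> ^^ k) u * (\<sigma> ^^ (k + 2)) u)"
    by (simp add: hom_mult)
  then show ?case
    using Suc hom_one hom_uminus [OF real_subfield_one [OF subfield]] by auto
qed

end

lemma LOG4_conj: "LOG4 \<sigma> (\<sigma> u) k = LOG4 \<sigma> u (Suc k)"
  unfolding LOG4_def by (simp only: funpow_Suc_right o_apply)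

lemma LOG4_add2_eq_zero:
  "(\<sigma> ^^ k) u * (\<sigma> ^^ (k + 2)) u \<in> {1, -1} \<Longrightarrow> LOG4 \<sigma> u k + LOG4 \<sigma> u (k + 2) = 0"
  unfolding LOG4_def by (rule ln_abs_add_eq_zero_if_mult_pm1)

lemma LOG4_period2:
  assumes "(\<sigma> ^^ 2) u = u" shows "LOG4 \<sigma> u (k + 2) = LOG4 \<sigma> u k"
  unfolding LOG4_def by (simp only: funpow_add o_apply assms)

definition max_abs_sum :: "real \<Rightarrow> real \<Rightarrow> real" where
  "max_abs_sum a b = 2 * max \<bar>a\<bar> \<bar>b\<bar> + \<bar>a\<bar> + \<bar>b\<bar>"

lemma max_abs_sum_sq_bounds:
  "8 * (a\<^sup>2 + b\<^sup>2) \<le> (max_abs_sum a b)\<^sup>2" "(max_abs_sum a b)\<^sup>2 \<le> 16 * (a\<^sup>2 + b\<^sup>2)"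
proof -
  define P Q where "P = max \<bar>a\<bar> \<bar>b\<bar>" and "Q = min \<bar>a\<bar> \<bar>b\<bar>"
  have PQ: "0 \<le> Q" "Q \<le> P" unfolding P_def Q_def by auto
  have sum: "max_abs_sum a b = 3 * P + Q"
    unfolding max_abs_sum_def P_def Q_def by (auto simp: max_def min_def)
  have sq: "a\<^sup>2 + b\<^sup>2 = P\<^sup>2 + Q\<^sup>2"
    unfolding P_def Q_def by (auto simp: max_def min_def)
  have "0 \<le> (P - Q) * (P + 7 * Q)" "0 \<le> 7 * (P - Q) * (P - Q) + 8 * P * Q + 8 * Q * Q"
    using PQ by simp_all
  then show "8 * (a\<^sup>2 + b\<^sup>2) \<le> (max_abs_sum a b)\<^sup>2" "(max_abs_sum a b)\<^sup>2 \<le> 16 * (a\<^sup>2 + b\<^sup>2)"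
    unfolding sum sq by (simp_all add: power2_eq_square algebra_simps)
qed

text \<open>Multiplying \<open>a + i b\<close> by a nonzero Gaussian integer \<open>x - i y\<close> either permutes
  \<open>\<bar>a\<bar>, \<bar>b\<bar>\<close> (for a unit) or at least doubles \<open>a\<^sup>2 + b\<^sup>2\<close>, which outweighs the factor \<open>\<surd>2\<close>
  by which \<open>max_abs_sum\<close> and the Euclidean norm can differ.\<close>
lemma max_abs_sum_le_gaussian_mult:
  fixes x y :: int and a b :: real
  assumes "(x, y) \<noteq> (0, 0)"
  shows "max_abs_sum a b \<le> max_abs_sum (x * a + y * b) (x * b - y * a)"
proof (cases "x\<^sup>2 + y\<^sup>2 \<ge> 2")
  case True
  define A B where "A = x * a + y * b" and "B = x * b - y * a"
  have "A\<^sup>2 + B\<^sup>2 = (real_of_int (x\<^sup>2 + y\<^sup>2)) * (a\<^sup>2 + b\<^sup>2)"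
    unfolding A_def B_def by (simp add: power2_eq_square algebra_simps)
  also have "\<dots> \<ge> 2 * (a\<^sup>2 + b\<^sup>2)"
  proof (rule mult_right_mono)
    show "2 \<le> real_of_int (x\<^sup>2 + y\<^sup>2)" using True by linarith
  qed simp
  finally have "16 * (a\<^sup>2 + b\<^sup>2) \<le> 8 * (A\<^sup>2 + B\<^sup>2)" by simp
  then have "(max_abs_sum a b)\<^sup>2 \<le> (max_abs_sum A B)\<^sup>2"
    using max_abs_sum_sq_bounds(2) [of a b] max_abs_sum_sq_bounds(1) [of A B] by linarith
  then show ?thesis
    unfolding A_def B_def by (rule power2_le_imp_le) (simp add: max_abs_sum_def)
next
  case False
  then have "x\<^sup>2 \<le> 1" "y\<^sup>2 \<le> 1"
    using zero_le_power2 [of x] zero_le_power2 [of y] by linarith+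
  then have "\<bar>x\<bar> \<le> 1" "\<bar>y\<bar> \<le> 1"
    using abs_square_le_1 by blast+
  then have "x \<in> {-1, 0, 1}" "y \<in> {-1, 0, 1}" by auto
  then show ?thesis
    using assms False by (auto simp: max_abs_sum_def max_def)
qed

lemma norm1_2_4_eq:
  "norm1_2 4 c = \<bar>c 0 1\<bar> + \<bar>c 0 2\<bar> + \<bar>c 0 3\<bar> + \<bar>c 1 2\<bar> + \<bar>c 1 3\<bar> + \<bar>c 2 3\<bar>"
proof -
  have "{(i, j). i < j \<and> j < (4::nat)} = {(0,1), (0,2), (0,3), (1,2), (1,3), (2,3)}"
    by (auto simp: less_Suc_eq numeral_eq_Suc)
  then show ?thesis unfolding norm1_2_def by simp
qed

lemma norm1_2_log_wedge_bounds:
  fixes a b c :: "nat \<Rightarrow> real" and n\<^sub>1 n\<^sub>2 n\<^sub>3 :: int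
  assumes e: "e \<in> {1, -1}" and W\<^sub>1: "W\<^sub>1 > 0"
    and a: "a 0 = W\<^sub>1" "a 1 = e * W\<^sub>1" "a 2 = W\<^sub>1" "a 3 = e * W\<^sub>1"
    and b: "b 0 = W\<^sub>2" "b 1 = W\<^sub>3" "b 2 = - W\<^sub>2" "b 3 = - W\<^sub>3"
    and c: "c 0 = W\<^sub>3" "c 1 = - W\<^sub>2" "c 2 = - W\<^sub>3" "c 3 = W\<^sub>2"
  defines "w \<equiv> (\<lambda>i j. of_int n\<^sub>1 * wedge a b i j + of_int n\<^sub>2 * wedge a c i j
                      + of_int n\<^sub>3 * wedge b c i j)"
  shows "norm1_2 4 w \<ge> 4 * \<bar>of_int n\<^sub>3\<bar> * (W\<^sub>2\<^sup>2 + W\<^sub>3\<^sup>2) \<and>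
         ((n\<^sub>1, n\<^sub>2) \<noteq> (0, 0) \<longrightarrow>
           norm1_2 4 w \<ge> 2 * W\<^sub>1 * (2 * max \<bar>W\<^sub>2\<bar> \<bar>W\<^sub>3\<bar> + \<bar>W\<^sub>2\<bar> + \<bar>W\<^sub>3\<bar>))"
proof (intro conjI impI)
  define S A B where "S = W\<^sub>2\<^sup>2 + W\<^sub>3\<^sup>2" and "A = n\<^sub>1 * W\<^sub>2 + n\<^sub>2 * W\<^sub>3"
    and "B = n\<^sub>1 * W\<^sub>3 - n\<^sub>2 * W\<^sub>2"
  have w: "w 0 1 = W\<^sub>1 * (B - e * A) - n\<^sub>3 * S" "w 2 3 = W\<^sub>1 * (e * A - B) - n\<^sub>3 * S"
    "w 0 3 = - W\<^sub>1 * (B + e * A) + n\<^sub>3 * S" "w 1 2 = - W\<^sub>1 * (B + e * A) - n\<^sub>3 * S"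
    "w 0 2 = - 2 * W\<^sub>1 * A" "w 1 3 = - 2 * e * W\<^sub>1 * B"
    unfolding w_def wedge_def a b c S_def A_def B_def by (simp_all add: power2_eq_square algebra_simps)
  have norm: "norm1_2 4 w = \<bar>w 0 1\<bar> + \<bar>w 0 2\<bar> + \<bar>w 0 3\<bar> + \<bar>w 1 2\<bar> + \<bar>w 1 3\<bar> + \<bar>w 2 3\<bar>"
    by (rule norm1_2_4_eq)
  have "w 0 1 + w 2 3 = - 2 * n\<^sub>3 * S" "w 0 3 - w 1 2 = 2 * n\<^sub>3 * S"
    "w 0 1 - w 2 3 = 2 * W\<^sub>1 * (B - e * A)" "w 0 3 + w 1 2 = - (2 * W\<^sub>1 * (B + e * A))"
    unfolding w by (simp_all add: algebra_simps)
  note pairs = this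
  have "4 * \<bar>of_int n\<^sub>3\<bar> * (W\<^sub>2\<^sup>2 + W\<^sub>3\<^sup>2) = \<bar>w 0 1 + w 2 3\<bar> + \<bar>w 0 3 - w 1 2\<bar>"
    unfolding pairs S_def by (simp add: abs_mult)
  also have "\<dots> \<le> norm1_2 4 w"
    unfolding norm using abs_triangle_ineq [of "w 0 1" "w 2 3"] abs_triangle_ineq4 [of "w 0 3" "w 1 2"]
      abs_ge_zero [of "w 0 2"] abs_ge_zero [of "w 1 3"] by linarith
  finally show "norm1_2 4 w \<ge> 4 * \<bar>of_int n\<^sub>3\<bar> * (W\<^sub>2\<^sup>2 + W\<^sub>3\<^sup>2)" .
  assume n: "(n\<^sub>1, n\<^sub>2) \<noteq> (0, 0)"
  have "\<bar>B - e * A\<bar> + \<bar>B + e * A\<bar> = 2 * max \<bar>A\<bar> \<bar>B\<bar>"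
    using e by (auto simp: max_def abs_if)
  moreover have "\<bar>w 0 1 - w 2 3\<bar> + \<bar>w 0 3 + w 1 2\<bar> = 2 * W\<^sub>1 * (\<bar>B - e * A\<bar> + \<bar>B + e * A\<bar>)"
    unfolding pairs using W\<^sub>1 by (simp only: abs_minus_cancel abs_mult) (simp add: distrib_left)
  moreover have "\<bar>w 0 2\<bar> + \<bar>w 1 3\<bar> = 2 * W\<^sub>1 * (\<bar>A\<bar> + \<bar>B\<bar>)"
    unfolding w using e W\<^sub>1 by (auto simp: abs_mult distrib_left)
  ultimately have "2 * W\<^sub>1 * max_abs_sum A B = \<bar>w 0 1 - w 2 3\<bar> + \<bar>w 0 3 + w 1 2\<bar> + \<bar>w 0 2\<bar> + \<bar>w 1 3\<bar>"
    unfolding max_abs_sum_def by (simp add: algebra_simps)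
  also have "\<dots> \<le> norm1_2 4 w"
    unfolding norm using abs_triangle_ineq4 [of "w 0 1" "w 2 3"] abs_triangle_ineq [of "w 0 3" "w 1 2"]
    by linarith
  finally have "2 * W\<^sub>1 * max_abs_sum A B \<le> norm1_2 4 w" .
  moreover have "max_abs_sum W\<^sub>2 W\<^sub>3 \<le> max_abs_sum A B"
    unfolding A_def B_def using max_abs_sum_le_gaussian_mult [OF n] .
  ultimately show "norm1_2 4 w \<ge> 2 * W\<^sub>1 * (2 * max \<bar>W\<^sub>2\<bar> \<bar>W\<^sub>3\<bar> + \<bar>W\<^sub>2\<bar> + \<bar>W\<^sub>3\<bar>)"
    using W\<^sub>1 unfolding max_abs_sum_def by (smt (verit) mult_left_mono)
qed

theorem mainTheorem8:
  fixes L l :: "real set" and \<sigma> :: "real \<Rightarrow> real" and u_l u\<^sub>0 :: real and n\<^sub>1 n\<^sub>2 n\<^sub>3 :: int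
  assumes L_field: "real_subfield L" and L_deg: "rat_dim L 4"
    and \<sigma>_aut: "field_aut L \<sigma>"
    and \<sigma>_order4: "\<forall>x\<in>L. (\<sigma> ^^ 4) x = x" "\<exists>x\<in>L. (\<sigma> ^^ 2) x \<noteq> x"
    and Gal_gen: "\<forall>g. field_aut L g \<longrightarrow> (\<exists>k<4. \<forall>x\<in>L. g x = (\<sigma> ^^ k) x)"
    and l_field: "real_subfield l" "l \<subseteq> L" and l_deg: "rat_dim l 2"
    and ul_unit: "int_unit l u_l" and ul_gt1: "u_l > 1"
    and ul_fund: "\<forall>\<epsilon>. int_unit l \<epsilon> \<longrightarrow> (\<exists>k::int. \<epsilon> = u_l powi k \<or> \<epsilon> = - (u_l powi k))"
    and u0_unit: "int_unit L u\<^sub>0" and u0_ne: "u\<^sub>0 \<noteq> 1" "u\<^sub>0 \<noteq> -1"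
    and u0_norm: "u\<^sub>0 * \<sigma> (\<sigma> u\<^sub>0) = 1 \<or> u\<^sub>0 * \<sigma> (\<sigma> u\<^sub>0) = -1"
  defines "W\<^sub>1 \<equiv> ln u_l" and "W\<^sub>2 \<equiv> ln \<bar>u\<^sub>0\<bar>" and "W\<^sub>3 \<equiv> ln \<bar>\<sigma> u\<^sub>0\<bar>"
    and "w \<equiv> (\<lambda>i j. of_int n\<^sub>1 * wedge (LOG4 \<sigma> u_l) (LOG4 \<sigma> u\<^sub>0) i j
                  + of_int n\<^sub>2 * wedge (LOG4 \<sigma> u_l) (LOG4 \<sigma> (\<sigma> u\<^sub>0)) i j
                  + of_int n\<^sub>3 * wedge (LOG4 \<sigma> u\<^sub>0) (LOG4 \<sigma> (\<sigma> u\<^sub>0)) i j)"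
  shows "norm1_2 4 w \<ge> 4 * \<bar>of_int n\<^sub>3\<bar> * (W\<^sub>2\<^sup>2 + W\<^sub>3\<^sup>2) \<and>
         ((n\<^sub>1, n\<^sub>2) \<noteq> (0, 0) \<longrightarrow>
           norm1_2 4 w \<ge> 2 * W\<^sub>1 * (2 * max \<bar>W\<^sub>2\<bar> \<bar>W\<^sub>3\<bar> + \<bar>W\<^sub>2\<bar> + \<bar>W\<^sub>3\<bar>))"
proof -
  interpret subfield_aut L \<sigma> using L_field \<sigma>_aut by unfold_locales
  have ul: "u_l \<in> l" and u0: "u\<^sub>0 \<in> L"
    using ul_unit u0_unit unfolding int_unit_def by auto
  have W\<^sub>1_pos: "W\<^sub>1 > 0" unfolding W\<^sub>1_def using ul_gt1 by simp
  obtain e where e: "e \<in> {1, -1}" "ln \<bar>\<sigma> u_l\<bar> = e * W\<^sub>1"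
    using ln_abs_conj_fundamental_unit [OF l_field l_deg ul_unit ul_gt1 ul_fund]
    unfolding W\<^sub>1_def by blast
  have "(\<sigma> ^^ 2) u_l = u_l"
    using quadratic_subfield_involution [OF l_field l_deg ul] by (simp add: numeral_2_eq_2)
  moreover have "LOG4 \<sigma> u_l 0 = W\<^sub>1" "LOG4 \<sigma> u_l 1 = e * W\<^sub>1"
    using e(2) ul_gt1 by (simp_all add: LOG4_def W\<^sub>1_def)
  ultimately have La: "LOG4 \<sigma> u_l 0 = W\<^sub>1" "LOG4 \<sigma> u_l 1 = e * W\<^sub>1"
      "LOG4 \<sigma> u_l 2 = W\<^sub>1" "LOG4 \<sigma> u_l 3 = e * W\<^sub>1"
    using LOG4_period2 [of \<sigma> u_l 0] LOG4_period2 [of \<sigma> u_l 1] by (simp_all add: numeral_eq_Suc)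
  have "LOG4 \<sigma> u\<^sub>0 k + LOG4 \<sigma> u\<^sub>0 (k + 2) = 0" for k
    using funpow_mult_funpow_add2_pm1 [OF u0] u0_norm by (intro LOG4_add2_eq_zero) auto
  moreover have "LOG4 \<sigma> u\<^sub>0 0 = W\<^sub>2" "LOG4 \<sigma> u\<^sub>0 1 = W\<^sub>3"
    by (simp_all add: LOG4_def W\<^sub>2_def W\<^sub>3_def)
  ultimately have Lb: "LOG4 \<sigma> u\<^sub>0 0 = W\<^sub>2" "LOG4 \<sigma> u\<^sub>0 1 = W\<^sub>3"
      "LOG4 \<sigma> u\<^sub>0 2 = - W\<^sub>2" "LOG4 \<sigma> u\<^sub>0 3 = - W\<^sub>3"
    by (simp_all add: numeral_eq_Suc add_eq_0_iff)
  have "LOG4 \<sigma> u\<^sub>0 4 = W\<^sub>2"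
    using \<sigma>_order4(1) u0 unfolding W\<^sub>2_def LOG4_def by simp
  then have Lc: "LOG4 \<sigma> (\<sigma> u\<^sub>0) 0 = W\<^sub>3" "LOG4 \<sigma> (\<sigma> u\<^sub>0) 1 = - W\<^sub>2"
      "LOG4 \<sigma> (\<sigma> u\<^sub>0) 2 = - W\<^sub>3" "LOG4 \<sigma> (\<sigma> u\<^sub>0) 3 = W\<^sub>2"
    using Lb by (simp_all add: LOG4_conj numeral_eq_Suc)
  show ?thesis
    unfolding w_def by (rule norm1_2_log_wedge_bounds [OF e(1) W\<^sub>1_pos La Lb Lc])
qed

end
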